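(* Consider a system of $M$ conservation laws with state space $\mathcal D\subset\mathbb R^M$, entropy variables $\mathbf v=(v^1,\dots,v^M):\mathcal D\to\mathbb R^M$, entropy flux potential $\Psi:\mathcal D\to\mathbb R$, and an entropy conservative two-point flux $\mathbf f^{\mathrm{EC}}=(f^{\mathrm{EC},1},\dots,f^{\mathrm{EC},M}):\mathcal D\times\mathcal D\to\mathbb R^M$, i.e. $(\mathbf v(\mathbf u_R)-\mathbf v(\mathbf u_L))^T\mathbf f^{\mathrm{EC}}(\mathbf u_L,\mathbf u_R)=\Psi(\mathbf u_R)-\Psi(\mathbf u_L)$ for all $\mathbf u_L,\mathbf u_R$. Let an element $R$ with $N_R+1$ interface nodes, diagonal positive weight matrix $\mathbf M_R$ and edge length $\Delta_R>0$ share its edge with $E\ge1$ elements $L_1,\dots,L_E$, where $L_i$ has $N_{L_i}+1$ interface nodes, diagonal positive weight matrix $\mathbf M_{L_i}$ and edge length $\Delta_{L_i}>0$, $\sum_i\Delta_{L_i}=\Delta_R$. Let $\mathbf P_{L_i2R}\in\mathbb R^{(N_R+1)\times(N_{L_i}+1)}$, $\mathbf P_{R2L_i}\in\mathbb R^{(N_{L_i}+1)\times(N_R+1)}$ satisfy $$\Delta_{L_i}\mathbf P_{R2L_i}^T\mathbf M_{L_i}=\Delta_R\mathbf M_R\mathbf P_{L_i2R},\qquad \mathbf P_{R2L_i}\mathbf 1^R=\mathbf 1^{L_i}\quad(i=1,\dots,E),\qquad \sum_{i=1}^E\mathbf P_{L_i2R}\mathbf 1^{L_i}=\mathbf 1^R.$$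 Given arbitrary states $\mathbf U^{L_i}_k\in\mathcal D$ ($k=0,\dots,N_{L_i}$) and $\mathbf U^R_j\in\mathcal D$ ($j=0,\dots,N_R$), define for $q=1,\dots,M$ the matrices $[\mathbf F^q_{L_i,R}]_{kj}=f^{\mathrm{EC},q}(\mathbf U^{L_i}_k,\mathbf U^R_j)$ and the surface fluxes $$\mathbf F^{q,R}:=\sum_{i=1}^E\mathbb E\big(\mathbf P_{L_i2R}\mathbf F^q_{L_i,R}\big),\qquad \mathbf F^{q,L_i}:=\mathbb E\big(\mathbf P_{R2L_i}(\mathbf F^q_{L_i,R})^T\big).$$ With $V^{q,L_i}_k=v^q(\mathbf U^{L_i}_k)$, $\Psi^{L_i}_k=\Psi(\mathbf U^{L_i}_k)$, $V^{q,R}_j=v^q(\mathbf U^R_j)$, $\Psi^R_j=\Psi(\mathbf U^R_j)$, one has for every $q$ $$\Delta U^q:=\Delta_R(\mathbf 1^R)^T\mathbf M_R\mathbf F^{q,R}-\sum_{i=1}^E\Delta_{L_i}(\mathbf 1^{L_i})^T\mathbf M_{L_i}\mathbf F^{q,L_i}=0$$ and $$\Delta S:=\Delta_R\Big(\sum_{q=1}^M(\mathbf V^{q,R})^T\mathbf M_R\mathbf F^{q,R}-(\mathbf 1^R)^T\mathbf M_R\boldsymbol\Psi^R\Big)-\sum_{i=1}^E\Delta_{L_i}\Big(\sum_{q=1}^M(\mathbf V^{q,L_i})^T\mathbf M_{L_i}\mathbf F^{q,L_i}-(\mathbf 1^{L_i})^T\mathbf M_{L_i}\boldsymbol\Psi^{L_i}\Big)=0,$$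 i.e. the fluxes are primary and entropy conservative.
   Context: Setting: a nodal discontinuous Galerkin spectral element method on Legendre–Gauss–Lobatto nodes (summation-by-parts operators) on a rectangular mesh with hanging nodes ($h$ refinement) and possibly differing polynomial degrees; a hyperbolic system with strongly convex entropy $S$, entropy variables $\mathbf v=\partial S/\partial\mathbf u$, entropy flux $F$, and potential $\Psi=\mathbf v\cdot\mathbf f-F$ where $\mathbf f$ is the interface-normal flux. Here one large element $R$ is adjacent across one edge to $E$ smaller elements $L_1,\dots,L_E$ stacked along that edge. $\Delta U^q$ and $\Delta S$ are (up to a common positive factor) the contributions of this interface to the time rate of change of the total integral of the $q$-th conserved variable and of the total entropy when entropy conservative volume fluxes are used; "primary and entropy conservative" means they vanish. Notation: $\mathbb E(\mathbf W)$ is the vector of diagonal entries of a square matrix $\mathbf W$; $\mathbf 1^R,\mathbf 1^{L_i}$ are all-ones vectors of the appropriate sizes. *)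

theory Defs
  imports "HOL-Analysis.Analysis"
begin

(* Matrices of variable size are represented as functions nat => nat => real,
   with dimensions carried explicitly; vectors as nat => real. *)

definition mat_mult :: "(nat \<Rightarrow> nat \<Rightarrow> real) \<Rightarrow> (nat \<Rightarrow> nat \<Rightarrow> real) \<Rightarrow> nat \<Rightarrow> (nat \<Rightarrow> nat \<Rightarrow> real)"
  where "mat_mult A B n = (\<lambda>r c. \<Sum>l<n. A r l * B l c)"

definition mat_transp :: "(nat \<Rightarrow> nat \<Rightarrow> real) \<Rightarrow> (nat \<Rightarrow> nat \<Rightarrow> real)"
  where "mat_transp A = (\<lambda>r c. A c r)"

definition diag_entries :: "(nat \<Rightarrow> nat \<Rightarrow> real) \<Rightarrow> (nat \<Rightarrow> real)"
  where "diag_entries W = (\<lambda>r. W r r)"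

end

theory Submission
  imports Defs
begin

text \<open>The SBP compatibility \<open>\<Delta>\<^sub>L\<^sub>i P\<^sub>R\<^sub>2\<^sub>L\<^sub>i\<^sup>T M\<^sub>L\<^sub>i = \<Delta>\<^sub>R M\<^sub>R P\<^sub>L\<^sub>i\<^sub>2\<^sub>R\<close> of the mortar
projections turns a weighted sum over the interface nodes of \<open>R\<close> into one over the nodes
of the \<open>L\<^sub>i\<close>. Hence the contributions of the two sides cancel whenever the two-point
values they see differ only by a jump \<open>\<phi>\<^sub>j - \<theta>\<^sub>i\<^sub>k\<close>, because the consistency conditions
\<open>P\<^sub>R\<^sub>2\<^sub>L\<^sub>i 1 = 1\<close> and \<open>\<Sum>\<^sub>i P\<^sub>L\<^sub>i\<^sub>2\<^sub>R 1 = 1\<close> turn the jump into the weighted sums of \<open>\<phi>\<close> and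
\<open>\<theta>\<close>. For the conserved variables the jump is zero; for the entropy the two-point values
are \<open>v \<cdot> f\<^sup>E\<^sup>C\<close>, and entropy conservation of \<open>f\<^sup>E\<^sup>C\<close> makes the jump \<open>\<Psi>(U\<^sup>R\<^sub>j) - \<Psi>(U\<^sup>L\<^sup>i\<^sub>k)\<close>.\<close>

lemma diag_entries_mat_mult: "diag_entries (mat_mult A B n) r = (\<Sum>l<n. A r l * B l r)"
  by (simp add: diag_entries_def mat_mult_def)

locale mortar_interface =
  fixes E NR :: nat and NL :: "nat \<Rightarrow> nat"
    and WR :: "nat \<Rightarrow> real" and WL :: "nat \<Rightarrow> nat \<Rightarrow> real"
    and DR :: real and DL :: "nat \<Rightarrow> real"
    and PL2R PR2L :: "nat \<Rightarrow> nat \<Rightarrow> nat \<Rightarrow> real"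
  assumes SBP: "\<And>i j k. i < E \<Longrightarrow> j \<le> NR \<Longrightarrow> k \<le> NL i \<Longrightarrow>
      DL i * (PR2L i k j * WL i k) = DR * (WR j * PL2R i j k)"
    and R2L_one: "\<And>i k. i < E \<Longrightarrow> k \<le> NL i \<Longrightarrow> (\<Sum>j\<le>NR. PR2L i k j) = 1"
    and L2R_one: "\<And>j. j \<le> NR \<Longrightarrow> (\<Sum>i<E. \<Sum>k\<le>NL i. PL2R i j k) = 1"
begin

lemma weighted_sum_transfer:
  "DR * (\<Sum>j\<le>NR. WR j * (\<Sum>i<E. \<Sum>k\<le>NL i. PL2R i j k * g i k j))
     = (\<Sum>i<E. DL i * (\<Sum>k\<le>NL i. WL i k * (\<Sum>j\<le>NR. PR2L i k j * g i k j)))"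
proof -
  have "DR * (\<Sum>j\<le>NR. WR j * (\<Sum>i<E. \<Sum>k\<le>NL i. PL2R i j k * g i k j))
      = (\<Sum>j\<le>NR. \<Sum>i<E. \<Sum>k\<le>NL i. DR * (WR j * PL2R i j k) * g i k j)"
    by (simp add: sum_distrib_left mult.assoc)
  also have "\<dots> = (\<Sum>i<E. \<Sum>k\<le>NL i. \<Sum>j\<le>NR. DR * (WR j * PL2R i j k) * g i k j)"
    by (subst sum.swap) (simp add: sum.swap[of _ "{..NR}"])
  also have "\<dots> = (\<Sum>i<E. \<Sum>k\<le>NL i. \<Sum>j\<le>NR. DL i * (PR2L i k j * WL i k) * g i k j)"
    by (intro sum.cong refl) (simp add: SBP)
  also have "\<dots> = (\<Sum>i<E. DL i * (\<Sum>k\<le>NL i. WL i k * (\<Sum>j\<le>NR. PR2L i k j * g i k j)))"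
    by (simp add: sum_distrib_left mult_ac)
  finally show ?thesis .
qed

lemma interface_balance:
  assumes jump: "\<And>i k j. i < E \<Longrightarrow> k \<le> NL i \<Longrightarrow> j \<le> NR \<Longrightarrow>
      gR i k j - gL i k j = \<phi> j - \<theta> i k"
  shows "DR * ((\<Sum>j\<le>NR. WR j * (\<Sum>i<E. \<Sum>k\<le>NL i. PL2R i j k * gR i k j))
                 - (\<Sum>j\<le>NR. WR j * \<phi> j))
       - (\<Sum>i<E. DL i * ((\<Sum>k\<le>NL i. WL i k * (\<Sum>j\<le>NR. PR2L i k j * gL i k j))
                          - (\<Sum>k\<le>NL i. WL i k * \<theta> i k))) = 0"
proof -
  have \<phi>: "(\<Sum>j\<le>NR. WR j * \<phi> j) = (\<Sum>j\<le>NR. WR j * (\<Sum>i<E. \<Sum>k\<le>NL i. PL2R i j k * \<phi> j))"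
    by (intro sum.cong refl) (simp add: L2R_one flip: sum_distrib_right)
  have \<theta>: "(\<Sum>k\<le>NL i. WL i k * \<theta> i k) = (\<Sum>k\<le>NL i. WL i k * (\<Sum>j\<le>NR. PR2L i k j * \<theta> i k))"
    if "i < E" for i
    using that by (intro sum.cong refl) (simp add: R2L_one flip: sum_distrib_right)
  have "DR * ((\<Sum>j\<le>NR. WR j * (\<Sum>i<E. \<Sum>k\<le>NL i. PL2R i j k * gR i k j))
                 - (\<Sum>j\<le>NR. WR j * \<phi> j))
      = DR * (\<Sum>j\<le>NR. WR j * (\<Sum>i<E. \<Sum>k\<le>NL i. PL2R i j k * (gR i k j - \<phi> j)))"
    unfolding \<phi> by (simp add: right_diff_distrib sum_subtractf)
  also have "\<dots> = (\<Sum>i<E. DL i * (\<Sum>k\<le>NL i. WL i k * (\<Sum>j\<le>NR. PR2L i k j * (gR i k j - \<phi> j))))"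
    by (rule weighted_sum_transfer)
  also have "\<dots> = (\<Sum>i<E. DL i * (\<Sum>k\<le>NL i. WL i k * (\<Sum>j\<le>NR. PR2L i k j * (gL i k j - \<theta> i k))))"
    using jump by (intro sum.cong refl arg_cong2[where f = times]) (simp add: algebra_simps)
  also have "\<dots> = (\<Sum>i<E. DL i * ((\<Sum>k\<le>NL i. WL i k * (\<Sum>j\<le>NR. PR2L i k j * gL i k j))
                                     - (\<Sum>k\<le>NL i. WL i k * \<theta> i k)))"
    by (intro sum.cong refl) (simp add: \<theta> right_diff_distrib sum_subtractf)
  finally show ?thesis by simp
qed

end

theorem corollary1:
  fixes M :: nat
    and D :: "(nat \<Rightarrow> real) set"
    and v :: "(nat \<Rightarrow> real) \<Rightarrow> nat \<Rightarrow> real"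
    and Psi :: "(nat \<Rightarrow> real) \<Rightarrow> real"
    and fEC :: "(nat \<Rightarrow> real) \<Rightarrow> (nat \<Rightarrow> real) \<Rightarrow> nat \<Rightarrow> real"
    and E NR :: nat and NL :: "nat \<Rightarrow> nat"
    and WR :: "nat \<Rightarrow> real" and WL :: "nat \<Rightarrow> nat \<Rightarrow> real"
    and DR :: real and DL :: "nat \<Rightarrow> real"
    and PL2R PR2L :: "nat \<Rightarrow> nat \<Rightarrow> nat \<Rightarrow> real"
    and UL :: "nat \<Rightarrow> nat \<Rightarrow> (nat \<Rightarrow> real)" and UR :: "nat \<Rightarrow> (nat \<Rightarrow> real)"
    and F :: "nat \<Rightarrow> nat \<Rightarrow> nat \<Rightarrow> nat \<Rightarrow> real"
    and FR :: "nat \<Rightarrow> nat \<Rightarrow> real" and FL :: "nat \<Rightarrow> nat \<Rightarrow> nat \<Rightarrow> real"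
  assumes EC: "\<And>uL uR. uL \<in> D \<Longrightarrow> uR \<in> D \<Longrightarrow>
        (\<Sum>q<M. (v uR q - v uL q) * fEC uL uR q) = Psi uR - Psi uL"
    and E_pos: "E \<ge> 1"
    and WR_pos: "\<And>j. j \<le> NR \<Longrightarrow> WR j > 0"
    and WL_pos: "\<And>i k. i < E \<Longrightarrow> k \<le> NL i \<Longrightarrow> WL i k > 0"
    and DR_pos: "DR > 0"
    and DL_pos: "\<And>i. i < E \<Longrightarrow> DL i > 0"
    and DL_sum: "(\<Sum>i<E. DL i) = DR"
    and SBP: "\<And>i j k. i < E \<Longrightarrow> j \<le> NR \<Longrightarrow> k \<le> NL i \<Longrightarrow>
        DL i * (mat_transp (PR2L i) j k * WL i k) = DR * (WR j * PL2R i j k)"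
    and R2L_one: "\<And>i k. i < E \<Longrightarrow> k \<le> NL i \<Longrightarrow> (\<Sum>j\<le>NR. PR2L i k j) = 1"
    and L2R_one: "\<And>j. j \<le> NR \<Longrightarrow> (\<Sum>i<E. \<Sum>k\<le>NL i. PL2R i j k) = 1"
    and UL_D: "\<And>i k. i < E \<Longrightarrow> k \<le> NL i \<Longrightarrow> UL i k \<in> D"
    and UR_D: "\<And>j. j \<le> NR \<Longrightarrow> UR j \<in> D"
    and F_def: "\<And>i q. F i q = (\<lambda>k j. fEC (UL i k) (UR j) q)"
    and FR_def: "\<And>q. FR q = (\<lambda>j. \<Sum>i<E. diag_entries (mat_mult (PL2R i) (F i q) (NL i + 1)) j)"
    and FL_def: "\<And>i q. FL i q = diag_entries (mat_mult (PR2L i) (mat_transp (F i q)) (NR + 1))"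
  shows "(\<forall>q<M. DR * (\<Sum>j\<le>NR. WR j * FR q j)
              - (\<Sum>i<E. DL i * (\<Sum>k\<le>NL i. WL i k * FL i q k)) = 0) \<and>
         DR * ((\<Sum>q<M. \<Sum>j\<le>NR. v (UR j) q * WR j * FR q j) - (\<Sum>j\<le>NR. WR j * Psi (UR j)))
         - (\<Sum>i<E. DL i * ((\<Sum>q<M. \<Sum>k\<le>NL i. v (UL i k) q * WL i k * FL i q k)
                            - (\<Sum>k\<le>NL i. WL i k * Psi (UL i k)))) = 0"
proof -
  define f where "f q i k j = fEC (UL i k) (UR j) q" for q i k j
  have FR: "FR q j = (\<Sum>i<E. \<Sum>k\<le>NL i. PL2R i j k * f q i k j)" for q j
    by (simp add: FR_def F_def f_def diag_entries_mat_mult lessThan_Suc_atMost)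
  have FL: "FL i q k = (\<Sum>j\<le>NR. PR2L i k j * f q i k j)" for i q k
    by (simp add: FL_def F_def f_def diag_entries_mat_mult mat_transp_def lessThan_Suc_atMost)
  interpret mortar_interface E NR NL WR WL DR DL PL2R PR2L
    using SBP R2L_one L2R_one by unfold_locales (simp_all add: mat_transp_def)
  have conservation: "DR * (\<Sum>j\<le>NR. WR j * FR q j)
      - (\<Sum>i<E. DL i * (\<Sum>k\<le>NL i. WL i k * FL i q k)) = 0" for q
    using interface_balance[of "f q" "f q" "\<lambda>_. 0" "\<lambda>_ _. 0"] by (simp add: FR FL)
  have entropy_jump: "(\<Sum>q<M. v (UR j) q * f q i k j) - (\<Sum>q<M. v (UL i k) q * f q i k j)
      = Psi (UR j) - Psi (UL i k)" if "i < E" "k \<le> NL i" "j \<le> NR" for i k j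
    using EC[OF UL_D UR_D] that by (simp add: f_def left_diff_distrib flip: sum_subtractf)
  have "(\<Sum>q<M. \<Sum>j\<le>NR. v (UR j) q * WR j * FR q j)
      = (\<Sum>j\<le>NR. WR j * (\<Sum>i<E. \<Sum>k\<le>NL i. PL2R i j k * (\<Sum>q<M. v (UR j) q * f q i k j)))"
    by (subst sum.swap) (simp add: FR sum_distrib_left sum.swap[of _ "{..<M}"] mult_ac)
  moreover have "(\<Sum>q<M. \<Sum>k\<le>NL i. v (UL i k) q * WL i k * FL i q k)
      = (\<Sum>k\<le>NL i. WL i k * (\<Sum>j\<le>NR. PR2L i k j * (\<Sum>q<M. v (UL i k) q * f q i k j)))" for i
    by (subst sum.swap) (simp add: FL sum_distrib_left sum.swap[of _ "{..<M}"] mult_ac)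
  ultimately show ?thesis
    using conservation interface_balance[OF entropy_jump] by simp
qed

end
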